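(* Let $R$ be a commutative ring in which $2$ is invertible, $I$ an ideal of $R$, and let $Q$ be a free $R$-module of rank $n$ with a fixed ordered basis. Let $\varphi'$ and $\varphi^*$ be invertible symmetric $n\times n$ matrices defining quadratic forms on $Q$ (quadratic spaces $Q_{\varphi'}$, $Q_{\varphi^*}$), with $\varphi'=\epsilon^t\varphi^*\epsilon$ for some $\epsilon\in\mathrm{GL}_n(R)$. Let $m\ge1$ and identify automorphisms of $Q\perp\mathbb{H}(R)^m$ with $(n+2m)\times(n+2m)$ matrices via the basis of $Q$ followed by $x_1,\dots,x_m,f_1,\dots,f_m$. Then $\mathrm{EO}_{(R,I)}(Q_{\varphi'},\mathbb{H}(R)^m)=(\epsilon^{-1}\perp I_{2m})\,\mathrm{EO}_{(R,I)}(Q_{\varphi^*},\mathbb{H}(R)^m)\,(\epsilon\perp I_{2m})$.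
   Context: For an invertible symmetric matrix $\varphi$ on $Q$, $\langle a,b\rangle_\varphi=a^t\varphi b$ in coordinates and $q_\varphi(a)=\tfrac12\langle a,a\rangle_\varphi$. $\mathbb{H}(R)^m=\mathbb{H}(P)$, $P=R^m$, $\mathbb{H}(P)=P\oplus P^*$ with basis $x_1,\dots,x_m$, dual basis $f_1,\dots,f_m$, form $q(y,g)=g(y)$. DSER transformations on $Q_\varphi\perp\mathbb{H}(P)$: for $\alpha:Q\to P$ let $\alpha^*:P^*\to Q$ satisfy $\langle\alpha^*(g),z\rangle_\varphi=g(\alpha(z))$, $E_\alpha(z,y,g)=(z-\alpha^*(g),y+\alpha(z)-\tfrac12\alpha\alpha^*(g),g)$; for $\beta:Q\to P^*$ let $\beta^*:P\to Q$ satisfy $\langle\beta^*(y),z\rangle_\varphi=\beta(z)(y)$, $E^*_\beta(z,y,g)=(z-\beta^*(y),y,g+\beta(z)-\tfrac12\beta\beta^*(y))$. $\mathrm{EO}_R(Q_\varphi,\mathbb{H}(P))$ is generated by all $E_\alpha,E^*_\beta$; $\mathrm{EO}_I(Q_\varphi,\mathbb{H}(P))$ by those with $\alpha(Q)\subseteq IP$, $\beta(Q)\subseteq IP^*$; $\mathrm{EO}_{(R,I)}(Q_\varphi,\mathbb{H}(P))$ is the normal closure of $\mathrm{EO}_I(Q_\varphi,\mathbb{H}(P))$ in $\mathrm{EO}_R(Q_\varphi,\mathbb{H}(P))$. *)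

theory Defs
  imports "Jordan_Normal_Form.Matrix"
begin

definition is_ideal :: "'a::comm_ring_1 set \<Rightarrow> bool" where
  "is_ideal I \<longleftrightarrow> 0 \<in> I \<and> (\<forall>a\<in>I. \<forall>b\<in>I. a + b \<in> I) \<and> (\<forall>r a. a \<in> I \<longrightarrow> r * a \<in> I)"

(* 1/2, meaningful when 2 is invertible *)
definition half :: "'a::comm_ring_1" where
  "half = (THE u. 2 * u = 1)"

definition bform :: "'a::comm_ring_1 mat \<Rightarrow> 'a vec \<Rightarrow> 'a vec \<Rightarrow> 'a" where
  "bform \<phi> a b = a \<bullet> (\<phi> *\<^sub>v b)"

(* J P = {y in R^m : all coordinates in J}; also used for J P^* w.r.t. the dual basis *)
definition ideal_vecs :: "nat \<Rightarrow> 'a set \<Rightarrow> 'a vec set" where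
  "ideal_vecs m J = {y \<in> carrier_vec m. \<forall>i<m. y $ i \<in> J}"

(* alpha : Q -> P given by an m x n matrix A; alpha^* : P^* -> Q (n x m matrix),
   <alpha^*(g), z>_phi = g(alpha z), where g in P^* has coordinates w.r.t. f_1..f_m *)
definition adj_alpha :: "'a::comm_ring_1 mat \<Rightarrow> nat \<Rightarrow> nat \<Rightarrow> 'a mat \<Rightarrow> 'a mat" where
  "adj_alpha \<phi> n m A = (THE M. M \<in> carrier_mat n m \<and>
     (\<forall>g\<in>carrier_vec m. \<forall>z\<in>carrier_vec n. bform \<phi> (M *\<^sub>v g) z = g \<bullet> (A *\<^sub>v z)))"

(* beta : Q -> P^* given by an m x n matrix B; beta^* : P -> Q,
   <beta^*(y), z>_phi = beta(z)(y) *)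
definition adj_beta :: "'a::comm_ring_1 mat \<Rightarrow> nat \<Rightarrow> nat \<Rightarrow> 'a mat \<Rightarrow> 'a mat" where
  "adj_beta \<phi> n m B = (THE M. M \<in> carrier_mat n m \<and>
     (\<forall>y\<in>carrier_vec m. \<forall>z\<in>carrier_vec n. bform \<phi> (M *\<^sub>v y) z = (B *\<^sub>v z) \<bullet> y))"

(* coordinates of Q _|_ H(P) = R^(n+2m): basis of Q, then x_1..x_m, then f_1..f_m *)
definition cz :: "nat \<Rightarrow> nat \<Rightarrow> 'a vec \<Rightarrow> 'a vec" where
  "cz n m v = vec n (\<lambda>i. v $ i)"
definition cy :: "nat \<Rightarrow> nat \<Rightarrow> 'a vec \<Rightarrow> 'a vec" where
  "cy n m v = vec m (\<lambda>i. v $ (n + i))"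
definition cg :: "nat \<Rightarrow> nat \<Rightarrow> 'a vec \<Rightarrow> 'a vec" where
  "cg n m v = vec m (\<lambda>i. v $ (n + m + i))"
definition join :: "nat \<Rightarrow> nat \<Rightarrow> 'a vec \<Rightarrow> 'a vec \<Rightarrow> 'a vec \<Rightarrow> 'a vec" where
  "join n m z y g = vec (n + 2 * m)
     (\<lambda>i. if i < n then z $ i else if i < n + m then y $ (i - n) else g $ (i - n - m))"

definition E_alpha :: "'a::comm_ring_1 mat \<Rightarrow> nat \<Rightarrow> nat \<Rightarrow> 'a mat \<Rightarrow> 'a vec \<Rightarrow> 'a vec" where
  "E_alpha \<phi> n m A v =
     (let z = cz n m v; y = cy n m v; g = cg n m v; As = adj_alpha \<phi> n m A in
      join n m (z - As *\<^sub>v g) (y + A *\<^sub>v z - half \<cdot>\<^sub>v (A *\<^sub>v (As *\<^sub>v g))) g)"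

definition E_beta :: "'a::comm_ring_1 mat \<Rightarrow> nat \<Rightarrow> nat \<Rightarrow> 'a mat \<Rightarrow> 'a vec \<Rightarrow> 'a vec" where
  "E_beta \<phi> n m B v =
     (let z = cz n m v; y = cy n m v; g = cg n m v; Bs = adj_beta \<phi> n m B in
      join n m (z - Bs *\<^sub>v y) y (g + B *\<^sub>v z - half \<cdot>\<^sub>v (B *\<^sub>v (Bs *\<^sub>v y))))"

definition lin_mat :: "nat \<Rightarrow> ('a::comm_ring_1 vec \<Rightarrow> 'a vec) \<Rightarrow> 'a mat" where
  "lin_mat N f = mat N N (\<lambda>(i, j). f (unit_vec N j) $ i)"

inductive_set gen_group :: "nat \<Rightarrow> 'a::comm_ring_1 mat set \<Rightarrow> 'a mat set"
  for N :: nat and S :: "'a mat set" where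
  gen_one: "1\<^sub>m N \<in> gen_group N S"
| gen_mult: "s \<in> S \<Longrightarrow> x \<in> gen_group N S \<Longrightarrow> s * x \<in> gen_group N S"
| gen_inv: "s \<in> S \<Longrightarrow> t \<in> carrier_mat N N \<Longrightarrow> s * t = 1\<^sub>m N \<Longrightarrow> t * s = 1\<^sub>m N \<Longrightarrow>
            x \<in> gen_group N S \<Longrightarrow> t * x \<in> gen_group N S"

definition normal_closure :: "nat \<Rightarrow> 'a::comm_ring_1 mat set \<Rightarrow> 'a mat set \<Rightarrow> 'a mat set" where
  "normal_closure N G H = gen_group N
     {g * h * g' | g h g'. g \<in> G \<and> h \<in> H \<and> g' \<in> carrier_mat N N \<and> g * g' = 1\<^sub>m N \<and> g' * g = 1\<^sub>m N}"

(* generators of EO_J(Q_phi, H(R^m)); J = UNIV gives EO_R *)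
definition EO_gens :: "'a::comm_ring_1 mat \<Rightarrow> nat \<Rightarrow> nat \<Rightarrow> 'a set \<Rightarrow> 'a mat set" where
  "EO_gens \<phi> n m J =
     {lin_mat (n + 2 * m) (E_alpha \<phi> n m A) | A. A \<in> carrier_mat m n \<and>
        (\<forall>z\<in>carrier_vec n. A *\<^sub>v z \<in> ideal_vecs m J)}
   \<union> {lin_mat (n + 2 * m) (E_beta \<phi> n m B) | B. B \<in> carrier_mat m n \<and>
        (\<forall>z\<in>carrier_vec n. B *\<^sub>v z \<in> ideal_vecs m J)}"

definition EO :: "'a::comm_ring_1 mat \<Rightarrow> nat \<Rightarrow> nat \<Rightarrow> 'a set \<Rightarrow> 'a mat set" where
  "EO \<phi> n m J = gen_group (n + 2 * m) (EO_gens \<phi> n m J)"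

definition EO_rel :: "'a::comm_ring_1 mat \<Rightarrow> nat \<Rightarrow> nat \<Rightarrow> 'a set \<Rightarrow> 'a mat set" where
  "EO_rel \<phi> n m I = normal_closure (n + 2 * m) (EO \<phi> n m UNIV) (EO \<phi> n m I)"

definition perp_id :: "nat \<Rightarrow> nat \<Rightarrow> 'a::comm_ring_1 mat \<Rightarrow> 'a mat" where
  "perp_id n m e = four_block_mat e (0\<^sub>m n (2 * m)) (0\<^sub>m (2 * m) n) (1\<^sub>m (2 * m))"

end

theory Submission
  imports Defs
begin

text \<open>
  Everything is transported by the isometry \<epsilon> \<perp> 1 from Q(\<phi>') \<perp> H(P) to Q(\<phi>*) \<perp> H(P).
  With respect to \<phi> the adjoint of \<alpha> is \<phi>\<inverse> \<alpha>^t, so \<phi>' = \<epsilon>^t \<phi>* \<epsilon> gives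
  \<alpha>*(\<phi>') = \<epsilon>\<inverse> (\<alpha> \<epsilon>\<inverse>)*(\<phi>*); hence E(\<alpha>) for \<phi>' equals
  (\<epsilon>\<inverse> \<perp> 1) E(\<alpha> \<epsilon>\<inverse>) (\<epsilon> \<perp> 1) for \<phi>*, and likewise for E*(\<beta>).
  As \<alpha> \<mapsto> \<alpha> \<epsilon>\<inverse> is a bijection preserving the condition \<alpha>(Q) \<subseteq> J P, conjugation by
  \<epsilon> \<perp> 1 maps the generators of EO(J) for \<phi>* onto those for \<phi>', both for J = R and J = I,
  and conjugation commutes with forming generated subgroups and normal closures.
\<close>

lemma join_eq_append:
  assumes "z \<in> carrier_vec n" "y \<in> carrier_vec m" "g \<in> carrier_vec m"
  shows "join n m z y g = z @\<^sub>v (y @\<^sub>v g)"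
  using assms unfolding join_def by (intro eq_vecI) auto

lemma coordinates_join [simp]:
  "z \<in> carrier_vec n \<Longrightarrow> cz n m (join n m z y g) = z"
  "y \<in> carrier_vec m \<Longrightarrow> cy n m (join n m z y g) = y"
  "g \<in> carrier_vec m \<Longrightarrow> cg n m (join n m z y g) = g"
  unfolding cz_def cy_def cg_def join_def by (auto intro: eq_vecI)

lemma join_coordinates: "v \<in> carrier_vec (n + 2 * m) \<Longrightarrow> join n m (cz n m v) (cy n m v) (cg n m v) = v"
  unfolding cz_def cy_def cg_def join_def by (intro eq_vecI) auto

lemma coordinates_carrier [simp]:
  "cz n m v \<in> carrier_vec n" "cy n m v \<in> carrier_vec m" "cg n m v \<in> carrier_vec m"
  unfolding cz_def cy_def cg_def by auto

lemma perp_id_carrier [simp]: "X \<in> carrier_mat n n \<Longrightarrow> perp_id n m X \<in> carrier_mat (n + 2 * m) (n + 2 * m)"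
  unfolding perp_id_def by (metis four_block_carrier_mat one_carrier_mat zero_carrier_mat mult_2)

lemma perp_id_mult_join:
  assumes "X \<in> carrier_mat n n" "z \<in> carrier_vec n" "y \<in> carrier_vec m" "g \<in> carrier_vec m"
  shows "perp_id n m X *\<^sub>v join n m z y g = join n m (X *\<^sub>v z) y g"
proof -
  have "y @\<^sub>v g \<in> carrier_vec (2 * m)"
    using assms by (simp add: mult_2)
  then show ?thesis
    using assms unfolding perp_id_def
    by (simp add: join_eq_append mult_mat_vec_split[of X n "1\<^sub>m (2 * m)" "2 * m" z])
qed

lemma perp_id_mult:
  assumes "X \<in> carrier_mat n n" "Y \<in> carrier_mat n n" "X * Y = 1\<^sub>m n"
  shows "perp_id n m X * perp_id n m Y = 1\<^sub>m (n + 2 * m)"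
proof -
  have "perp_id n m X * perp_id n m Y = four_block_mat (X * Y + 0\<^sub>m n (2 * m) * 0\<^sub>m (2 * m) n)
     (X * 0\<^sub>m n (2 * m) + 0\<^sub>m n (2 * m) * 1\<^sub>m (2 * m)) (0\<^sub>m (2 * m) n * Y + 1\<^sub>m (2 * m) * 0\<^sub>m (2 * m) n)
     (0\<^sub>m (2 * m) n * 0\<^sub>m n (2 * m) + 1\<^sub>m (2 * m) * 1\<^sub>m (2 * m))"
    unfolding perp_id_def using assms by (intro mult_four_block_mat) auto
  then show ?thesis
    using assms by simp
qed

definition mat_induced :: "nat \<Rightarrow> nat \<Rightarrow> ('a::comm_ring_1 vec \<Rightarrow> 'a vec) \<Rightarrow> bool" where
  "mat_induced N k f \<longleftrightarrow> (\<exists>M\<in>carrier_mat k N. \<forall>v\<in>carrier_vec N. f v = M *\<^sub>v v)"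

lemma mat_induced_mult:
  assumes "mat_induced N k f" "X \<in> carrier_mat l k"
  shows "mat_induced N l (\<lambda>v. X *\<^sub>v f v)"
proof -
  obtain M where "M \<in> carrier_mat k N" "\<forall>v\<in>carrier_vec N. f v = M *\<^sub>v v"
    using assms(1) unfolding mat_induced_def by blast
  then show ?thesis
    unfolding mat_induced_def using assms(2) by (intro bexI[of _ "X * M"]) auto
qed

lemma mat_induced_add:
  assumes "mat_induced N k f" "mat_induced N k g"
  shows "mat_induced N k (\<lambda>v. f v + g v)"
proof -
  obtain M M' where "M \<in> carrier_mat k N" "\<forall>v\<in>carrier_vec N. f v = M *\<^sub>v v"
    and "M' \<in> carrier_mat k N" "\<forall>v\<in>carrier_vec N. g v = M' *\<^sub>v v"
    using assms unfolding mat_induced_def by blast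
  then show ?thesis
    unfolding mat_induced_def by (intro bexI[of _ "M + M'"]) (auto simp: add_mult_distrib_mat_vec)
qed

lemma mat_induced_diff:
  assumes "mat_induced N k f" "mat_induced N k g"
  shows "mat_induced N k (\<lambda>v. f v - g v)"
proof -
  obtain M M' where "M \<in> carrier_mat k N" "\<forall>v\<in>carrier_vec N. f v = M *\<^sub>v v"
    and "M' \<in> carrier_mat k N" "\<forall>v\<in>carrier_vec N. g v = M' *\<^sub>v v"
    using assms unfolding mat_induced_def by blast
  then show ?thesis
    unfolding mat_induced_def by (intro bexI[of _ "M - M'"]) (auto simp: minus_mult_distrib_mat_vec)
qed

lemma mat_induced_smult:
  assumes "mat_induced N k f"
  shows "mat_induced N k (\<lambda>v. c \<cdot>\<^sub>v f v)"
proof -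
  obtain M where M: "M \<in> carrier_mat k N" "\<forall>v\<in>carrier_vec N. f v = M *\<^sub>v v"
    using assms unfolding mat_induced_def by blast
  moreover have "(c \<cdot>\<^sub>m M) *\<^sub>v v = c \<cdot>\<^sub>v (M *\<^sub>v v)" if "v \<in> carrier_vec N" for v
    using M(1) that by (intro eq_vecI) auto
  ultimately show ?thesis
    unfolding mat_induced_def by (intro bexI[of _ "c \<cdot>\<^sub>m M"]) auto
qed

lemma mat_induced_select:
  assumes "\<forall>i<k. h i < N"
  shows "mat_induced N k (\<lambda>v::'a::comm_ring_1 vec. vec k (\<lambda>i. v $ h i))"
proof -
  let ?M = "mat k N (\<lambda>(i, j). if j = h i then 1 else 0) :: 'a mat"
  have "row ?M i = unit_vec N (h i)" if "i < k" for i
    using that assms by (intro eq_vecI) (auto simp: unit_vec_def)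
  then have "vec k (\<lambda>i. v $ h i) = ?M *\<^sub>v v" if "v \<in> carrier_vec N" for v
    using that assms by (intro eq_vecI) auto
  then show ?thesis
    unfolding mat_induced_def by (intro bexI[of _ ?M]) auto
qed

lemma mat_induced_coordinates:
  "mat_induced (n + 2 * m) n (cz n m)" "mat_induced (n + 2 * m) m (cy n m)" "mat_induced (n + 2 * m) m (cg n m)"
  unfolding cz_def cy_def cg_def by (auto intro: mat_induced_select)

lemma mat_induced_join:
  assumes "mat_induced N n f" "mat_induced N m h" "mat_induced N m k"
  shows "mat_induced N (n + 2 * m) (\<lambda>v. join n m (f v) (h v) (k v))"
proof -
  obtain F H K where F: "F \<in> carrier_mat n N" "\<forall>v\<in>carrier_vec N. f v = F *\<^sub>v v"
    and H: "H \<in> carrier_mat m N" "\<forall>v\<in>carrier_vec N. h v = H *\<^sub>v v"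
    and K: "K \<in> carrier_mat m N" "\<forall>v\<in>carrier_vec N. k v = K *\<^sub>v v"
    using assms unfolding mat_induced_def by blast
  have "F @\<^sub>r (H @\<^sub>r K) \<in> carrier_mat (n + 2 * m) N"
    using F H K by (simp add: carrier_append_rows mult_2)
  moreover have "join n m (f v) (h v) (k v) = (F @\<^sub>r (H @\<^sub>r K)) *\<^sub>v v" if "v \<in> carrier_vec N" for v
    using F H K that
    by (simp add: join_eq_append mat_mult_append[OF H(1) K(1)]
        mat_mult_append[OF F(1) carrier_append_rows[OF H(1) K(1)]])
  ultimately show ?thesis
    unfolding mat_induced_def by blast
qed

lemma lin_mat_eqI:
  assumes "M \<in> carrier_mat N N" "\<And>v. v \<in> carrier_vec N \<Longrightarrow> f v = M *\<^sub>v v"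
  shows "lin_mat N f = M"
  using assms unfolding lin_mat_def by (intro eq_matI) auto

lemma lin_mat_conj:
  assumes "mat_induced N N g" "P \<in> carrier_mat N N" "Q \<in> carrier_mat N N"
    and "\<And>v. v \<in> carrier_vec N \<Longrightarrow> f v = Q *\<^sub>v g (P *\<^sub>v v)"
  shows "lin_mat N f = Q * lin_mat N g * P"
proof -
  obtain M where M: "M \<in> carrier_mat N N" "\<forall>v\<in>carrier_vec N. g v = M *\<^sub>v v"
    using assms(1) unfolding mat_induced_def by blast
  then have "lin_mat N g = M"
    by (intro lin_mat_eqI) auto
  moreover have "lin_mat N f = Q * M * P"
    using M assms(2-4) by (intro lin_mat_eqI) (auto simp: assoc_mult_mat_vec[of _ N N _ N])
  ultimately show ?thesis by simp
qed

lemma E_alpha_join: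
  assumes "z \<in> carrier_vec n" "y \<in> carrier_vec m" "g \<in> carrier_vec m"
  shows "E_alpha \<phi> n m A (join n m z y g) =
    join n m (z - adj_alpha \<phi> n m A *\<^sub>v g)
      (y + A *\<^sub>v z - half \<cdot>\<^sub>v (A *\<^sub>v (adj_alpha \<phi> n m A *\<^sub>v g))) g"
  using assms unfolding E_alpha_def Let_def by simp

lemma E_beta_join:
  assumes "z \<in> carrier_vec n" "y \<in> carrier_vec m" "g \<in> carrier_vec m"
  shows "E_beta \<phi> n m B (join n m z y g) =
    join n m (z - adj_beta \<phi> n m B *\<^sub>v y) y
      (g + B *\<^sub>v z - half \<cdot>\<^sub>v (B *\<^sub>v (adj_beta \<phi> n m B *\<^sub>v y)))"
  using assms unfolding E_beta_def Let_def by simp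

lemma mat_induced_E_alpha:
  assumes "A \<in> carrier_mat m n" "adj_alpha \<phi> n m A \<in> carrier_mat n m"
  shows "mat_induced (n + 2 * m) (n + 2 * m) (E_alpha \<phi> n m A)"
  unfolding E_alpha_def Let_def
  by (intro mat_induced_join mat_induced_diff mat_induced_add mat_induced_smult mat_induced_mult
      mat_induced_coordinates) (rule assms mat_induced_coordinates)+

lemma mat_induced_E_beta:
  assumes "B \<in> carrier_mat m n" "adj_beta \<phi> n m B \<in> carrier_mat n m"
  shows "mat_induced (n + 2 * m) (n + 2 * m) (E_beta \<phi> n m B)"
  unfolding E_beta_def Let_def
  by (intro mat_induced_join mat_induced_diff mat_induced_add mat_induced_smult mat_induced_mult
      mat_induced_coordinates) (rule assms mat_induced_coordinates)+

section \<open>Adjoints\<close>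

definition is_adjoint :: "'a::comm_ring_1 mat \<Rightarrow> nat \<Rightarrow> nat \<Rightarrow> 'a mat \<Rightarrow> 'a mat \<Rightarrow> bool" where
  "is_adjoint \<phi> n m A M \<longleftrightarrow> M \<in> carrier_mat n m \<and>
     (\<forall>g\<in>carrier_vec m. \<forall>z\<in>carrier_vec n. bform \<phi> (M *\<^sub>v g) z = g \<bullet> (A *\<^sub>v z))"

lemma is_adjoint_entry:
  assumes "\<phi> \<in> carrier_mat n n" "\<psi> \<in> carrier_mat n n" "\<phi> * \<psi> = 1\<^sub>m n"
    and "is_adjoint \<phi> n m A M" "i < n" "j < m"
  shows "M $$ (i, j) = unit_vec m j \<bullet> (A *\<^sub>v (\<psi> *\<^sub>v unit_vec n i))"
proof -
  have M: "M \<in> carrier_mat n m"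
    using assms(4) unfolding is_adjoint_def by simp
  have "\<phi> *\<^sub>v (\<psi> *\<^sub>v unit_vec n i) = unit_vec n i"
    using assms(1-3) by (simp flip: assoc_mult_mat_vec)
  then have "M $$ (i, j) = bform \<phi> (M *\<^sub>v unit_vec m j) (\<psi> *\<^sub>v unit_vec n i)"
    using M assms(5,6) unfolding bform_def by simp
  then show ?thesis
    using assms(2,4,6) unfolding is_adjoint_def by simp
qed

lemma is_adjoint_unique:
  assumes "\<phi> \<in> carrier_mat n n" "\<psi> \<in> carrier_mat n n" "\<phi> * \<psi> = 1\<^sub>m n"
    and "is_adjoint \<phi> n m A M" "is_adjoint \<phi> n m A M'"
  shows "M = M'"
  using is_adjoint_entry[OF assms(1-4)] is_adjoint_entry[OF assms(1-3,5)] assms(4,5)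
  unfolding is_adjoint_def by (intro eq_matI) auto

lemma is_adjoint_transpose:
  assumes "\<phi> \<in> carrier_mat n n" "transpose_mat \<phi> = \<phi>" "\<psi> \<in> carrier_mat n n" "\<phi> * \<psi> = 1\<^sub>m n"
    and "A \<in> carrier_mat m n"
  shows "is_adjoint \<phi> n m A (\<psi> * transpose_mat A)"
  unfolding is_adjoint_def
proof (intro conjI ballI)
  fix g z :: "'a vec" assume g: "g \<in> carrier_vec m" and z: "z \<in> carrier_vec n"
  have Ag: "transpose_mat A *\<^sub>v g \<in> carrier_vec n"
    using assms(5) g by simp
  have "bform \<phi> ((\<psi> * transpose_mat A) *\<^sub>v g) z = (\<psi> *\<^sub>v (transpose_mat A *\<^sub>v g)) \<bullet> (\<phi> *\<^sub>v z)"
    unfolding bform_def using assms(3,5) g by simp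
  also have "\<dots> = (transpose_mat \<phi> *\<^sub>v (\<psi> *\<^sub>v (transpose_mat A *\<^sub>v g))) \<bullet> z"
    using assms(1,3) Ag z by (simp add: transpose_vec_mult_scalar)
  also have "transpose_mat \<phi> *\<^sub>v (\<psi> *\<^sub>v (transpose_mat A *\<^sub>v g)) = transpose_mat A *\<^sub>v g"
    using assms(1-4) Ag assoc_mult_mat_vec[of \<phi> n n \<psi> n] by simp
  also have "(transpose_mat A *\<^sub>v g) \<bullet> z = g \<bullet> (A *\<^sub>v z)"
    by (rule transpose_vec_mult_scalar[OF assms(5) z g])
  finally show "bform \<phi> ((\<psi> * transpose_mat A) *\<^sub>v g) z = g \<bullet> (A *\<^sub>v z)" .
qed (use assms in auto)

lemma adj_alpha_eq:
  assumes "\<phi> \<in> carrier_mat n n" "transpose_mat \<phi> = \<phi>" "\<psi> \<in> carrier_mat n n" "\<phi> * \<psi> = 1\<^sub>m n"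
    and "A \<in> carrier_mat m n"
  shows "adj_alpha \<phi> n m A = \<psi> * transpose_mat A"
proof -
  have "adj_alpha \<phi> n m A = (THE M. is_adjoint \<phi> n m A M)"
    unfolding adj_alpha_def is_adjoint_def ..
  also have "\<dots> = \<psi> * transpose_mat A"
    using is_adjoint_transpose[OF assms] is_adjoint_unique[OF assms(1,3,4)] by blast
  finally show ?thesis .
qed

lemma adj_beta_eq_adj_alpha:
  assumes "B \<in> carrier_mat m n"
  shows "adj_beta \<phi> n m B = adj_alpha \<phi> n m B"
proof -
  have "(B *\<^sub>v z) \<bullet> y = y \<bullet> (B *\<^sub>v z)" if "y \<in> carrier_vec m" "z \<in> carrier_vec n" for y z
    using assms that by (intro comm_scalar_prod[of _ m]) auto
  then show ?thesis
    unfolding adj_beta_def adj_alpha_def by simp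
qed

section \<open>Conjugating generated subgroups and normal closures\<close>

lemma gen_group_carrier:
  assumes "S \<subseteq> carrier_mat N N"
  shows "gen_group N S \<subseteq> carrier_mat N N"
proof
  fix x assume "x \<in> gen_group N S"
  then show "x \<in> carrier_mat N N"
    by (induction rule: gen_group.induct) (use assms in auto)
qed

definition conjugates :: "nat \<Rightarrow> 'a::comm_ring_1 mat set \<Rightarrow> 'a mat set \<Rightarrow> 'a mat set" where
  "conjugates N G H = {g * h * g' | g h g'. g \<in> G \<and> h \<in> H \<and> g' \<in> carrier_mat N N \<and> g * g' = 1\<^sub>m N \<and> g' * g = 1\<^sub>m N}"

lemma normal_closure_conjugates: "normal_closure N G H = gen_group N (conjugates N G H)"
  unfolding normal_closure_def conjugates_def ..

lemma conjugates_carrier: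
  assumes "G \<subseteq> carrier_mat N N" "H \<subseteq> carrier_mat N N"
  shows "conjugates N G H \<subseteq> carrier_mat N N"
  using assms unfolding conjugates_def by fastforce

locale inverse_pair =
  fixes N :: nat and P Q :: "'a::comm_ring_1 mat"
  assumes P_carrier: "P \<in> carrier_mat N N" and Q_carrier: "Q \<in> carrier_mat N N"
    and P_Q: "P * Q = 1\<^sub>m N" and Q_P: "Q * P = 1\<^sub>m N"
begin

lemma swap: "inverse_pair N Q P"
  using P_carrier Q_carrier P_Q Q_P by unfold_locales

lemma conj_carrier: "X \<in> carrier_mat N N \<Longrightarrow> Q * X * P \<in> carrier_mat N N"
  using P_carrier Q_carrier by simp

lemma conj_one: "Q * 1\<^sub>m N * P = 1\<^sub>m N"
  using P_carrier Q_carrier Q_P by simp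

lemma conj_mult:
  assumes "X \<in> carrier_mat N N" "Y \<in> carrier_mat N N"
  shows "(Q * X * P) * (Q * Y * P) = Q * (X * Y) * P"
proof -
  have "(Q * X * P) * (Q * Y * P) = Q * (X * ((P * Q) * (Y * P)))"
    using assms P_carrier Q_carrier by (simp add: assoc_mult_mat[of _ N N _ N _ N])
  then show ?thesis
    using assms P_carrier Q_carrier P_Q by (simp add: assoc_mult_mat[of _ N N _ N _ N])
qed

lemma conj_cancel: "X \<in> carrier_mat N N \<Longrightarrow> P * (Q * X * P) * Q = X"
  using P_carrier Q_carrier P_Q
  by (simp add: assoc_mult_mat[of _ N N _ N _ N] assoc_mult_mat[of P N N Q N, symmetric])

lemma subset_conj_image:
  assumes "A \<subseteq> carrier_mat N N" "(\<lambda>X. P * X * Q) ` A \<subseteq> B"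
  shows "A \<subseteq> (\<lambda>X. Q * X * P) ` B"
proof
  fix x assume x: "x \<in> A"
  then have "x = Q * (P * x * Q) * P"
    using assms(1) inverse_pair.conj_cancel[OF swap] by auto
  then show "x \<in> (\<lambda>X. Q * X * P) ` B"
    using x assms(2) by blast
qed

lemma conj_gen_group_subset:
  assumes "S \<subseteq> carrier_mat N N"
  shows "(\<lambda>X. Q * X * P) ` gen_group N S \<subseteq> gen_group N ((\<lambda>X. Q * X * P) ` S)"
proof clarify
  fix x assume "x \<in> gen_group N S"
  then show "Q * x * P \<in> gen_group N ((\<lambda>X. Q * X * P) ` S)"
  proof (induction rule: gen_group.induct)
    case gen_one
    then show ?case
      using conj_one gen_group.gen_one by metis
  next
    case (gen_mult s x)
    have "(Q * s * P) * (Q * x * P) \<in> gen_group N ((\<lambda>X. Q * X * P) ` S)"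
      by (rule gen_group.gen_mult) (use gen_mult in auto)
    then show ?case
      using gen_mult assms gen_group_carrier conj_mult by (metis subsetD)
  next
    case (gen_inv s t x)
    have s: "s \<in> carrier_mat N N" and x: "x \<in> carrier_mat N N"
      using gen_inv assms gen_group_carrier by auto
    have "(Q * t * P) * (Q * x * P) \<in> gen_group N ((\<lambda>X. Q * X * P) ` S)"
    proof (rule gen_group.gen_inv)
      show "Q * s * P * (Q * t * P) = 1\<^sub>m N" "Q * t * P * (Q * s * P) = 1\<^sub>m N"
        using gen_inv s conj_mult conj_one by auto
    qed (use gen_inv conj_carrier in auto)
    then show ?case
      using gen_inv x conj_mult by auto
  qed
qed

lemma image_conj_cancel:
  assumes "S \<subseteq> carrier_mat N N"
  shows "(\<lambda>X. P * X * Q) ` (\<lambda>X. Q * X * P) ` S = S"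
proof -
  have "(\<lambda>X. P * X * Q) ` (\<lambda>X. Q * X * P) ` S = (\<lambda>X. X) ` S"
    unfolding image_image using assms conj_cancel by (intro image_cong) auto
  then show ?thesis
    by simp
qed

lemma gen_group_conj:
  assumes "S \<subseteq> carrier_mat N N"
  shows "gen_group N ((\<lambda>X. Q * X * P) ` S) = (\<lambda>X. Q * X * P) ` gen_group N S"
proof
  \<comment> \<open>The reverse inclusion is the forward one for the inverse conjugation.\<close>
  interpret swapped: inverse_pair N Q P
    by (rule swap)
  have T: "(\<lambda>X. Q * X * P) ` S \<subseteq> carrier_mat N N"
    using assms conj_carrier by auto
  then have "(\<lambda>X. P * X * Q) ` gen_group N ((\<lambda>X. Q * X * P) ` S) \<subseteq> gen_group N S"
    using swapped.conj_gen_group_subset image_conj_cancel[OF assms] by metis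
  then show "gen_group N ((\<lambda>X. Q * X * P) ` S) \<subseteq> (\<lambda>X. Q * X * P) ` gen_group N S"
    using gen_group_carrier[OF T] by (rule subset_conj_image[rotated])
qed (rule conj_gen_group_subset[OF assms])

lemma conj_conjugates_subset:
  assumes "G \<subseteq> carrier_mat N N" "H \<subseteq> carrier_mat N N"
  shows "(\<lambda>X. Q * X * P) ` conjugates N G H
    \<subseteq> conjugates N ((\<lambda>X. Q * X * P) ` G) ((\<lambda>X. Q * X * P) ` H)"
proof (clarsimp simp: conjugates_def)
  fix g h g' assume g: "g \<in> G" and h: "h \<in> H" and g': "g' \<in> carrier_mat N N"
    and inv: "g * g' = 1\<^sub>m N" "g' * g = 1\<^sub>m N"
  have carriers: "g \<in> carrier_mat N N" "h \<in> carrier_mat N N"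
    using g h assms by auto
  then have "Q * (g * h * g') * P = (Q * g * P) * (Q * h * P) * (Q * g' * P)"
    using g' by (simp add: conj_mult)
  moreover have "(Q * g * P) * (Q * g' * P) = 1\<^sub>m N" "(Q * g' * P) * (Q * g * P) = 1\<^sub>m N"
    using carriers g' inv by (simp_all add: conj_mult conj_one)
  ultimately show "\<exists>a b c. Q * (g * h * g') * P = a * b * c \<and> a \<in> (\<lambda>X. Q * X * P) ` G \<and>
      b \<in> (\<lambda>X. Q * X * P) ` H \<and> c \<in> carrier_mat N N \<and> a * c = 1\<^sub>m N \<and> c * a = 1\<^sub>m N"
    using g h g' conj_carrier by blast
qed

lemma normal_closure_conj:
  assumes "G \<subseteq> carrier_mat N N" "H \<subseteq> carrier_mat N N"
  shows "normal_closure N ((\<lambda>X. Q * X * P) ` G) ((\<lambda>X. Q * X * P) ` H)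
    = (\<lambda>X. Q * X * P) ` normal_closure N G H"
proof -
  interpret swapped: inverse_pair N Q P
    by (rule swap)
  have GH: "(\<lambda>X. Q * X * P) ` G \<subseteq> carrier_mat N N" "(\<lambda>X. Q * X * P) ` H \<subseteq> carrier_mat N N"
    using assms conj_carrier by auto
  then have "(\<lambda>X. P * X * Q) ` conjugates N ((\<lambda>X. Q * X * P) ` G) ((\<lambda>X. Q * X * P) ` H)
      \<subseteq> conjugates N G H"
    using swapped.conj_conjugates_subset image_conj_cancel assms by metis
  then have "conjugates N ((\<lambda>X. Q * X * P) ` G) ((\<lambda>X. Q * X * P) ` H)
      = (\<lambda>X. Q * X * P) ` conjugates N G H"
    using conjugates_carrier[OF GH] conj_conjugates_subset[OF assms]
    by (intro equalityI subset_conj_image)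
  then show ?thesis
    unfolding normal_closure_conjugates using conjugates_carrier[OF assms] by (simp add: gen_group_conj)
qed

end

section \<open>Changing the form by a congruence\<close>

definition ideal_valued :: "nat \<Rightarrow> nat \<Rightarrow> 'a::comm_ring_1 set \<Rightarrow> 'a mat \<Rightarrow> bool" where
  "ideal_valued m n J A \<longleftrightarrow> A \<in> carrier_mat m n \<and> (\<forall>z\<in>carrier_vec n. A *\<^sub>v z \<in> ideal_vecs m J)"

lemma ideal_valued_mult:
  assumes "ideal_valued m n J A" "X \<in> carrier_mat n n"
  shows "ideal_valued m n J (A * X)"
  using assms unfolding ideal_valued_def by auto

lemma EO_gens_ideal_valued:
  "EO_gens \<phi> n m J = {lin_mat (n + 2 * m) (E_alpha \<phi> n m A) | A. ideal_valued m n J A}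
     \<union> {lin_mat (n + 2 * m) (E_beta \<phi> n m B) | B. ideal_valued m n J B}"
  unfolding EO_gens_def ideal_valued_def ..

lemma EO_gens_carrier: "EO_gens \<phi> n m J \<subseteq> carrier_mat (n + 2 * m) (n + 2 * m)"
  unfolding EO_gens_def lin_mat_def by auto

lemma EO_carrier: "EO \<phi> n m J \<subseteq> carrier_mat (n + 2 * m) (n + 2 * m)"
  unfolding EO_def by (rule gen_group_carrier[OF EO_gens_carrier])

locale form_congruence =
  fixes n :: nat and \<phi>' \<phi>s \<psi>s \<epsilon> \<epsilon>inv :: "'a::comm_ring_1 mat"
  assumes phis_carrier: "\<phi>s \<in> carrier_mat n n" and phis_sym: "transpose_mat \<phi>s = \<phi>s"
    and psis_carrier: "\<psi>s \<in> carrier_mat n n" and phis_psis: "\<phi>s * \<psi>s = 1\<^sub>m n"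
    and eps_carrier: "\<epsilon> \<in> carrier_mat n n" and epsinv_carrier: "\<epsilon>inv \<in> carrier_mat n n"
    and eps_epsinv: "\<epsilon> * \<epsilon>inv = 1\<^sub>m n" and epsinv_eps: "\<epsilon>inv * \<epsilon> = 1\<^sub>m n"
    and congr: "\<phi>' = transpose_mat \<epsilon> * \<phi>s * \<epsilon>"
begin

lemma phi'_carrier: "\<phi>' \<in> carrier_mat n n"
  using phis_carrier eps_carrier congr by simp

lemma phi'_sym: "transpose_mat \<phi>' = \<phi>'"
  using phis_carrier eps_carrier phis_sym congr
  by (simp add: transpose_mult[of _ n n _ n] assoc_mult_mat[of _ n n _ n _ n])

lemma phi'_mult_inverse: "\<phi>' * (\<epsilon>inv * \<psi>s * transpose_mat \<epsilon>inv) = 1\<^sub>m n"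
proof -
  have "\<phi>' * (\<epsilon>inv * \<psi>s * transpose_mat \<epsilon>inv)
      = transpose_mat \<epsilon> * (\<phi>s * ((\<epsilon> * \<epsilon>inv) * (\<psi>s * transpose_mat \<epsilon>inv)))"
    using phis_carrier psis_carrier eps_carrier epsinv_carrier congr
    by (simp add: assoc_mult_mat[of _ n n _ n _ n])
  also have "\<dots> = transpose_mat (\<epsilon>inv * \<epsilon>)"
    using phis_carrier psis_carrier eps_carrier epsinv_carrier phis_psis eps_epsinv
    by (simp add: transpose_mult[of _ n n _ n] assoc_mult_mat[of _ n n _ n _ n, symmetric])
  finally show ?thesis
    using epsinv_eps by simp
qed

lemma adj_alpha_congruent:
  assumes "A \<in> carrier_mat m n"
  shows "adj_alpha \<phi>' n m A = \<epsilon>inv * adj_alpha \<phi>s n m (A * \<epsilon>inv)"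
  using assms phis_carrier psis_carrier epsinv_carrier
  by (simp add: adj_alpha_eq[OF phi'_carrier phi'_sym _ phi'_mult_inverse]
      adj_alpha_eq[OF phis_carrier phis_sym psis_carrier phis_psis] transpose_mult[of _ m n _ n]
      assoc_mult_mat[of _ n n _ n _ m])

lemma adj_alpha_carrier:
  assumes "A \<in> carrier_mat m n"
  shows "adj_alpha \<phi>s n m A \<in> carrier_mat n m"
  using assms psis_carrier by (simp add: adj_alpha_eq[OF phis_carrier phis_sym psis_carrier phis_psis])

lemma epsinv_eps_mult_vec:
  assumes "z \<in> carrier_vec n"
  shows "\<epsilon>inv *\<^sub>v (\<epsilon> *\<^sub>v z) = z"
  using assms eps_carrier epsinv_carrier epsinv_eps assoc_mult_mat_vec[of \<epsilon>inv n n \<epsilon> n z] by simp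

lemma E_alpha_congruent:
  assumes A: "A \<in> carrier_mat m n" and v: "v \<in> carrier_vec (n + 2 * m)"
  shows "E_alpha \<phi>' n m A v = perp_id n m \<epsilon>inv *\<^sub>v E_alpha \<phi>s n m (A * \<epsilon>inv) (perp_id n m \<epsilon> *\<^sub>v v)"
proof -
  define S where "S = adj_alpha \<phi>s n m (A * \<epsilon>inv)"
  have S: "S \<in> carrier_mat n m"
    unfolding S_def using A epsinv_carrier by (simp add: adj_alpha_carrier)
  obtain z y g where "z \<in> carrier_vec n" "y \<in> carrier_vec m" "g \<in> carrier_vec m"
    and "v = join n m z y g"
    using v join_coordinates by (metis coordinates_carrier)
  then show ?thesis
    using A S eps_carrier epsinv_carrier
    by (simp add: perp_id_mult_join E_alpha_join adj_alpha_congruent epsinv_eps_mult_vec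
        mult_minus_distrib_mat_vec[of \<epsilon>inv n n] flip: S_def)
qed

lemma E_beta_congruent:
  assumes B: "B \<in> carrier_mat m n" and v: "v \<in> carrier_vec (n + 2 * m)"
  shows "E_beta \<phi>' n m B v = perp_id n m \<epsilon>inv *\<^sub>v E_beta \<phi>s n m (B * \<epsilon>inv) (perp_id n m \<epsilon> *\<^sub>v v)"
proof -
  define S where "S = adj_alpha \<phi>s n m (B * \<epsilon>inv)"
  have B': "B * \<epsilon>inv \<in> carrier_mat m n"
    using B epsinv_carrier by simp
  have S: "S \<in> carrier_mat n m"
    unfolding S_def using B' by (rule adj_alpha_carrier)
  obtain z y g where "z \<in> carrier_vec n" "y \<in> carrier_vec m" "g \<in> carrier_vec m"
    and "v = join n m z y g"
    using v join_coordinates by (metis coordinates_carrier)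
  then show ?thesis
    using B S eps_carrier epsinv_carrier
    by (simp add: perp_id_mult_join E_beta_join adj_beta_eq_adj_alpha[OF B] adj_beta_eq_adj_alpha[OF B']
        adj_alpha_congruent epsinv_eps_mult_vec mult_minus_distrib_mat_vec[of \<epsilon>inv n n] flip: S_def)
qed

lemma lin_mat_E_alpha_congruent:
  assumes "A \<in> carrier_mat m n"
  shows "lin_mat (n + 2 * m) (E_alpha \<phi>' n m A)
    = perp_id n m \<epsilon>inv * lin_mat (n + 2 * m) (E_alpha \<phi>s n m (A * \<epsilon>inv)) * perp_id n m \<epsilon>"
  using assms eps_carrier epsinv_carrier
  by (intro lin_mat_conj mat_induced_E_alpha E_alpha_congruent adj_alpha_carrier) auto

lemma lin_mat_E_beta_congruent:
  assumes "B \<in> carrier_mat m n"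
  shows "lin_mat (n + 2 * m) (E_beta \<phi>' n m B)
    = perp_id n m \<epsilon>inv * lin_mat (n + 2 * m) (E_beta \<phi>s n m (B * \<epsilon>inv)) * perp_id n m \<epsilon>"
  using assms eps_carrier epsinv_carrier
  by (intro lin_mat_conj mat_induced_E_beta E_beta_congruent)
    (auto simp: adj_beta_eq_adj_alpha adj_alpha_carrier)

lemma image_mult_epsinv:
  assumes "\<And>A. ideal_valued m n J A \<Longrightarrow> F' A = c (F (A * \<epsilon>inv))"
  shows "{F' A | A. ideal_valued m n J A} = c ` {F A | A. ideal_valued m n J A}"
proof (intro equalityI subsetI)
  fix x assume "x \<in> {F' A | A. ideal_valued m n J A}"
  then obtain A where "ideal_valued m n J A" "x = F' A" by blast
  then show "x \<in> c ` {F A | A. ideal_valued m n J A}"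
    using assms epsinv_carrier ideal_valued_mult by blast
next
  fix x assume "x \<in> c ` {F A | A. ideal_valued m n J A}"
  then obtain B where B: "ideal_valued m n J B" "x = c (F B)" by blast
  then have "B \<in> carrier_mat m n"
    unfolding ideal_valued_def by simp
  then have "B * \<epsilon> * \<epsilon>inv = B"
    using eps_carrier epsinv_carrier eps_epsinv by simp
  then have "x = F' (B * \<epsilon>)"
    using B assms eps_carrier ideal_valued_mult by metis
  then show "x \<in> {F' A | A. ideal_valued m n J A}"
    using B eps_carrier ideal_valued_mult by blast
qed

lemma EO_gens_congruent:
  "EO_gens \<phi>' n m J = (\<lambda>X. perp_id n m \<epsilon>inv * X * perp_id n m \<epsilon>) ` EO_gens \<phi>s n m J"
proof -
  let ?c = "\<lambda>X. perp_id n m \<epsilon>inv * X * perp_id n m \<epsilon>"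
  have "{lin_mat (n + 2 * m) (E_alpha \<phi>' n m A) | A. ideal_valued m n J A}
      = ?c ` {lin_mat (n + 2 * m) (E_alpha \<phi>s n m A) | A. ideal_valued m n J A}"
    by (rule image_mult_epsinv) (simp add: lin_mat_E_alpha_congruent ideal_valued_def)
  moreover have "{lin_mat (n + 2 * m) (E_beta \<phi>' n m B) | B. ideal_valued m n J B}
      = ?c ` {lin_mat (n + 2 * m) (E_beta \<phi>s n m B) | B. ideal_valued m n J B}"
    by (rule image_mult_epsinv) (simp add: lin_mat_E_beta_congruent ideal_valued_def)
  ultimately show ?thesis
    unfolding EO_gens_ideal_valued image_Un by simp
qed

lemma perp_id_inverse_pair: "inverse_pair (n + 2 * m) (perp_id n m \<epsilon>) (perp_id n m \<epsilon>inv)"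
  using eps_carrier epsinv_carrier eps_epsinv epsinv_eps by unfold_locales (auto intro: perp_id_mult)

lemma EO_congruent: "EO \<phi>' n m J = (\<lambda>X. perp_id n m \<epsilon>inv * X * perp_id n m \<epsilon>) ` EO \<phi>s n m J"
  unfolding EO_def EO_gens_congruent
  by (rule inverse_pair.gen_group_conj[OF perp_id_inverse_pair EO_gens_carrier])

lemma EO_rel_congruent:
  "EO_rel \<phi>' n m J = (\<lambda>X. perp_id n m \<epsilon>inv * X * perp_id n m \<epsilon>) ` EO_rel \<phi>s n m J"
  unfolding EO_rel_def EO_congruent
  by (rule inverse_pair.normal_closure_conj[OF perp_id_inverse_pair EO_carrier EO_carrier])

end

theorem mainTheorem15:
  fixes I :: "'a::comm_ring_1 set" and n m :: nat
    and \<phi>' \<phi>s \<epsilon> \<epsilon>inv :: "'a mat"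
  assumes two_inv: "\<exists>u::'a. 2 * u = 1"
    and ideal: "is_ideal I"
    and m: "m \<ge> 1"
    and phi'_car: "\<phi>' \<in> carrier_mat n n" and phi'_sym: "transpose_mat \<phi>' = \<phi>'"
    and phi'_inv: "\<exists>\<psi>. \<psi> \<in> carrier_mat n n \<and> \<phi>' * \<psi> = 1\<^sub>m n \<and> \<psi> * \<phi>' = 1\<^sub>m n"
    and phis_car: "\<phi>s \<in> carrier_mat n n" and phis_sym: "transpose_mat \<phi>s = \<phi>s"
    and phis_inv: "\<exists>\<psi>. \<psi> \<in> carrier_mat n n \<and> \<phi>s * \<psi> = 1\<^sub>m n \<and> \<psi> * \<phi>s = 1\<^sub>m n"
    and eps_car: "\<epsilon> \<in> carrier_mat n n" and epsinv_car: "\<epsilon>inv \<in> carrier_mat n n"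
    and eps_inv: "\<epsilon> * \<epsilon>inv = 1\<^sub>m n" "\<epsilon>inv * \<epsilon> = 1\<^sub>m n"
    and congr: "\<phi>' = transpose_mat \<epsilon> * \<phi>s * \<epsilon>"
  shows "EO_rel \<phi>' n m I =
    {perp_id n m \<epsilon>inv * M * perp_id n m \<epsilon> | M. M \<in> EO_rel \<phi>s n m I}"
proof -
  obtain \<psi>s where "\<psi>s \<in> carrier_mat n n" "\<phi>s * \<psi>s = 1\<^sub>m n"
    using phis_inv by blast
  then interpret form_congruence n \<phi>' \<phi>s \<psi>s \<epsilon> \<epsilon>inv
    using phis_car phis_sym eps_car epsinv_car eps_inv congr by unfold_locales
  show ?thesis
    using EO_rel_congruent by blast
qed

end
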